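(* Let $\Phi=\phi_1\wedge\cdots\wedge\phi_m$ be an extremal instance over variables $\mathbf X=(X_1,\dots,X_n)$ with product distribution $\mathcal D$, and suppose $\Phi$ is satisfiable, i.e. $\Pr_{\mathcal D}(\Phi(\mathbf X))>0$. Then $\mathrm{PRS}(\Phi,\mathcal D)$ terminates with probability $1$, whatever rule is used to choose the false clause in each iteration. On termination, $\mathbf X$ is distributed according to $\mathcal D_\Phi$, the distribution $\mathcal D$ conditioned on $\Phi(\mathbf X)$ being true.
   Context: Setting: For $i\in[n]$, $X_i$ takes values in a countable set $D_i$ equipped with a probability distribution $\mathcal D_i$; $\mathcal D=\mathcal D_1\times\cdots\times\mathcal D_n$ is the product distribution. A formula $\Phi=\phi_1\wedge\cdots\wedge\phi_m$ is a conjunction of clauses. Each clause $\phi_k$ is a Boolean function of the variables $X_i$ with $i\in\mathrm{Scp}(\phi_k)$, where $\mathrm{Scp}(\phi_k)\subseteq[n]$ is a nonempty set called the scope of $\phi_k$. The instance $\Phi$ is extremal if for all $1\le k<\ell\le m$ with $\mathrm{Scp}(\phi_k)\cap\mathrm{Scp}(\phi_\ell)\neq\emptyset$, the formula $\phi_k\vee\phi_\ell$ is true under every assignment, i.e. two clauses sharing a variable are never simultaneously false. Algorithm $\mathrm{PRS}(\Phi,\mathcal D)$ (Partial Rejection Sampling): sample $\mathbf X$ from $\mathcal D$. While $\Phi(\mathbf X)$ is false, choose any clause $\phi_k$ that is false under the current $\mathbf X$ and resample all variables $X_i$, $i\in\mathrm{Scp}(\phi_k)$, independently from their distributions $\mathcal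 D_i$. The choice of the false clause may be made by an arbitrary rule; it may depend on the current values, the past history, or independent external randomness. Each execution of the loop body is one iteration. *)

theory Defs
  imports "HOL-Probability.Probability"
begin

text \<open>Variables are indexed by a finite type 'i (so n = CARD('i)), clauses by a
finite type 'c (so m = CARD('c)).
The distribution of X_i is the pmf Dd i; its (countable) value set D_i is V i.\<close>

definition prod_dist :: "('i::finite \<Rightarrow> 'a pmf) \<Rightarrow> ('i \<Rightarrow> 'a) pmf" where
  "prod_dist Dd = Pi_pmf UNIV undefined Dd"

definition formula :: "('c \<Rightarrow> ('i \<Rightarrow> 'a) \<Rightarrow> bool) \<Rightarrow> ('i \<Rightarrow> 'a) \<Rightarrow> bool" where
  "formula phi x = (\<forall>k. phi k x)"

definition resample :: "('i::finite \<Rightarrow> 'a pmf) \<Rightarrow> 'i set \<Rightarrow> ('i \<Rightarrow> 'a) \<Rightarrow> ('i \<Rightarrow> 'a) pmf" where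
  "resample Dd S x = map_pmf (\<lambda>z i. if i \<in> S then z i else x i) (prod_dist Dd)"

text \<open>State of the run = full history: list of assignments (current one first)
and list of clauses chosen so far (most recent first).  The selection rule sel
is an arbitrary randomized function of the full history.\<close>
type_synonym ('i, 'a, 'c) history = "('i \<Rightarrow> 'a) list \<times> 'c list"

definition prs_step ::
  "('c \<Rightarrow> ('i \<Rightarrow> 'a) \<Rightarrow> bool) \<Rightarrow> ('i::finite \<Rightarrow> 'a pmf) \<Rightarrow> ('c \<Rightarrow> 'i set)
   \<Rightarrow> (('i, 'a, 'c) history \<Rightarrow> 'c pmf) \<Rightarrow> ('i, 'a, 'c) history \<Rightarrow> ('i, 'a, 'c) history pmf" where
  "prs_step phi Dd S sel h =
     (if formula phi (hd (fst h)) then return_pmf h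
      else bind_pmf (sel h) (\<lambda>k.
             map_pmf (\<lambda>y. (y # fst h, k # snd h)) (resample Dd (S k) (hd (fst h)))))"

primrec prs_run ::
  "('c \<Rightarrow> ('i \<Rightarrow> 'a) \<Rightarrow> bool) \<Rightarrow> ('i::finite \<Rightarrow> 'a pmf) \<Rightarrow> ('c \<Rightarrow> 'i set)
   \<Rightarrow> (('i, 'a, 'c) history \<Rightarrow> 'c pmf) \<Rightarrow> nat \<Rightarrow> ('i, 'a, 'c) history pmf" where
  "prs_run phi Dd S sel 0 = map_pmf (\<lambda>x. ([x], [])) (prod_dist Dd)"
| "prs_run phi Dd S sel (Suc t) = bind_pmf (prs_run phi Dd S sel t) (prs_step phi Dd S sel)"

definition extremal :: "('i \<Rightarrow> 'a set) \<Rightarrow> ('c \<Rightarrow> 'i set) \<Rightarrow> ('c \<Rightarrow> ('i \<Rightarrow> 'a) \<Rightarrow> bool) \<Rightarrow> bool" where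
  "extremal V S phi = (\<forall>k l. k \<noteq> l \<longrightarrow> S k \<inter> S l \<noteq> {} \<longrightarrow>
      (\<forall>x. (\<forall>i. x i \<in> V i) \<longrightarrow> phi k x \<or> phi l x))"

end

theory Submission
  imports Defs
begin

text \<open>
  In an extremal instance two clauses that are false at the same assignment have disjoint
  scopes, and resampling a set of variables disjoint from the scope of a false clause leaves
  that clause false. Hence every clause false at x stays false until its own scope is
  resampled: the order in which false clauses are chosen is irrelevant, and resolving all
  clauses false at x amounts to resampling the union of their scopes at once. So the
  probability L(x) of terminating in a set A does not depend on the selection rule, and
  L(x) is the average of L over that joint resampling.

  Let C(R) be the set of assignments satisfying every clause whose scope avoids R. The set
  of assignments in C(R) at which exactly the family F is false is the intersection of an
  event on the scopes of F with C(scopes F), an event on the remaining variables. By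
  independence and invariance of the product distribution under resampling, both
  a(R) = E[1_C(R) L] and c(R) = P(C(R)) satisfy a linear recursion over such families, with
  inhomogeneous terms P(Phi \<inter> A) and P(Phi) respectively. A maximum principle for the
  difference a(R) - c(R) P(Phi \<inter> A) / P(Phi) shows that it vanishes; at R = UNIV this
  says E[L] = P(A | Phi).
\<close>

lemma integrable_measure_pmf_bounded:
  fixes f :: "'b \<Rightarrow> real"
  assumes "\<And>x. \<bar>f x\<bar> \<le> B"
  shows "integrable (measure_pmf M) f"
  by (rule measure_pmf.integrable_const_bound[where B=B]) (use assms in auto)

lemma abs_expectation_pmf_le:
  fixes f :: "'b \<Rightarrow> real"
  assumes "\<And>x. \<bar>f x\<bar> \<le> B"
  shows "\<bar>measure_pmf.expectation M f\<bar> \<le> B"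
proof -
  have int: "integrable (measure_pmf M) f"
    using assms by (rule integrable_measure_pmf_bounded)
  have lo: "- B \<le> f x" and hi: "f x \<le> B" for x
    using assms[of x] by (auto simp: abs_le_iff)
  have "- B \<le> measure_pmf.expectation M f"
    by (intro measure_pmf.integral_ge_const int AE_I2 lo)
  moreover have "measure_pmf.expectation M f \<le> B"
    by (intro measure_pmf.integral_le_const int AE_I2 hi)
  ultimately show ?thesis by linarith
qed

lemma expectation_cong_set_pmf:
  fixes f g :: "'b \<Rightarrow> real"
  assumes "\<And>x. x \<in> set_pmf M \<Longrightarrow> f x = g x"
  shows "measure_pmf.expectation M f = measure_pmf.expectation M g"
  by (rule integral_cong_AE) (use assms in \<open>auto simp: AE_measure_pmf_iff\<close>)

lemma expectation_bind_pmf: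
  fixes f :: "'b \<Rightarrow> real"
  assumes "\<And>x. \<bar>f x\<bar> \<le> B"
  shows "measure_pmf.expectation (bind_pmf M N) f =
         measure_pmf.expectation M (\<lambda>x. measure_pmf.expectation (N x) f)"
  unfolding measure_pmf_bind
  by (rule integral_bind[where K="count_space UNIV" and B=B and B'=1])
     (use assms in \<open>auto simp: measure_pmf.emeasure_space_1 measure_pmf_in_subprob_space\<close>)

lemma prob_bind_pmf:
  "measure_pmf.prob (bind_pmf M N) A = measure_pmf.expectation M (\<lambda>x. measure_pmf.prob (N x) A)"
  using expectation_bind_pmf[of "indicator A" 1 M N] by simp

lemma expectation_pmf_dominated_convergence:
  fixes s :: "nat \<Rightarrow> 'b \<Rightarrow> real"
  assumes "\<And>x. x \<in> set_pmf M \<Longrightarrow> (\<lambda>n. s n x) \<longlonglongrightarrow> f x"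
    and "\<And>n x. \<bar>s n x\<bar> \<le> B"
  shows "(\<lambda>n. measure_pmf.expectation M (s n)) \<longlonglongrightarrow> measure_pmf.expectation M f"
  by (rule integral_dominated_convergence[where w="\<lambda>_. B"])
     (use assms in \<open>auto simp: AE_measure_pmf_iff\<close>)

lemma measure_cond_pmf:
  assumes "set_pmf p \<inter> s \<noteq> {}"
  shows "measure_pmf.prob (cond_pmf p s) A = measure_pmf.prob p (s \<inter> A) / measure_pmf.prob p s"
  using cond_pmf.rep_eq[OF assms] emeasure_measure_pmf_not_zero[OF assms]
  by (simp add: measure_pmf.emeasure_eq_measure)

subsection \<open>Product distributions and resampling\<close>

lemma set_pmf_prod_dist: "set_pmf (prod_dist Dd) = {x. \<forall>i. x i \<in> set_pmf (Dd i)}"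
  unfolding prod_dist_def by (auto simp: set_Pi_pmf PiE_dflt_def)

lemma resample_eq_Pi_pmf:
  "resample Dd U x = Pi_pmf UNIV undefined (\<lambda>i. if i \<in> U then Dd i else return_pmf (x i))"
proof -
  have "Pi_pmf UNIV undefined (\<lambda>i. if i \<in> U then Dd i else return_pmf (x i)) =
        Pi_pmf UNIV undefined (\<lambda>i. bind_pmf (Dd i) (\<lambda>v. return_pmf (if i \<in> U then v else x i)))"
    by (intro Pi_pmf_cong) (auto simp: bind_return_pmf')
  also have "\<dots> = bind_pmf (prod_dist Dd)
                    (\<lambda>z. Pi_pmf UNIV undefined (\<lambda>i. return_pmf (if i \<in> U then z i else x i)))"
    unfolding prod_dist_def by (rule Pi_pmf_bind) simp
  also have "\<dots> = resample Dd U x"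
    by (simp add: resample_def map_pmf_def)
  finally show ?thesis ..
qed

lemma bind_pmf_if_return:
  "bind_pmf M (\<lambda>v. if c then N else return_pmf v) = (if c then N else M)"
  by (cases c) (simp_all add: bind_return_pmf')

lemma bind_resample_resample:
  "bind_pmf (resample Dd A x) (resample Dd B) = resample Dd (A \<union> B) x"
proof -
  have "bind_pmf (resample Dd A x) (resample Dd B) =
        bind_pmf (Pi_pmf UNIV undefined (\<lambda>i. if i \<in> A then Dd i else return_pmf (x i)))
          (\<lambda>z. Pi_pmf UNIV undefined (\<lambda>i. (\<lambda>i v. if i \<in> B then Dd i else return_pmf v) i (z i)))"
    by (simp add: resample_eq_Pi_pmf[abs_def])
  also have "\<dots> = Pi_pmf UNIV undefined (\<lambda>i. bind_pmf (if i \<in> A then Dd i else return_pmf (x i))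
                     (\<lambda>v. if i \<in> B then Dd i else return_pmf v))"
    by (rule Pi_pmf_bind[symmetric]) simp
  also have "\<dots> = resample Dd (A \<union> B) x"
    unfolding resample_eq_Pi_pmf
    by (intro Pi_pmf_cong) (auto simp: bind_return_pmf bind_return_pmf' bind_pmf_if_return)
  finally show ?thesis .
qed

lemma resample_empty: "resample Dd {} x = return_pmf x"
  by (simp add: resample_def)

lemma bind_prod_dist_resample: "bind_pmf (prod_dist Dd) (resample Dd R) = prod_dist Dd"
  using bind_resample_resample[of Dd UNIV undefined R] by (simp add: resample_def)

lemma resample_cong:
  "(\<And>i. i \<notin> U \<Longrightarrow> x i = x' i) \<Longrightarrow> resample Dd U x = resample Dd U x'"
  unfolding resample_def by (intro map_pmf_cong refl) (auto simp: fun_eq_iff)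

lemma set_pmf_resample:
  assumes "y \<in> set_pmf (resample Dd U x)"
  shows "\<forall>i\<in>U. y i \<in> set_pmf (Dd i)" and "\<forall>i. i \<notin> U \<longrightarrow> y i = x i"
  using assms by (auto simp: resample_def set_pmf_prod_dist)

lemma resample_in_support:
  "x \<in> set_pmf (prod_dist Dd) \<Longrightarrow> y \<in> set_pmf (resample Dd U x) \<Longrightarrow> y \<in> set_pmf (prod_dist Dd)"
  using set_pmf_resample[of y Dd U x] by (auto simp: set_pmf_prod_dist)

definition depends_only_on :: "'i set \<Rightarrow> ('i \<Rightarrow> 'a) set \<Rightarrow> (('i \<Rightarrow> 'a) \<Rightarrow> 'b) \<Rightarrow> bool" where
  "depends_only_on R X f \<longleftrightarrow> (\<forall>x\<in>X. \<forall>y\<in>X. (\<forall>i\<in>R. x i = y i) \<longrightarrow> f x = f y)"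

lemma depends_only_onD:
  "depends_only_on R X f \<Longrightarrow> x \<in> X \<Longrightarrow> y \<in> X \<Longrightarrow> (\<And>i. i \<in> R \<Longrightarrow> x i = y i) \<Longrightarrow> f x = f y"
  unfolding depends_only_on_def by blast

lemma depends_only_on_indicator:
  "depends_only_on R X (indicator B :: _ \<Rightarrow> real) \<longleftrightarrow>
     (\<forall>x\<in>X. \<forall>y\<in>X. (\<forall>i\<in>R. x i = y i) \<longrightarrow> (x \<in> B \<longleftrightarrow> y \<in> B))"
  by (auto simp: depends_only_on_def indicator_def)

lemma depends_only_on_mult:
  "depends_only_on R X f \<Longrightarrow> depends_only_on R X g \<Longrightarrow> depends_only_on R X (\<lambda>x. f x * g x)"
  unfolding depends_only_on_def by (intro ballI impI arg_cong2[where f="(*)"]) blast+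

lemma depends_only_on_expectation_resample:
  fixes f :: "('i::finite \<Rightarrow> 'a) \<Rightarrow> real"
  shows "depends_only_on (- R) X (\<lambda>x. measure_pmf.expectation (resample Dd R x) f)"
  unfolding depends_only_on_def
proof (intro ballI impI)
  fix x y :: "'i \<Rightarrow> 'a" assume "\<forall>i\<in>- R. x i = y i"
  then have "resample Dd R x = resample Dd R y" by (intro resample_cong) auto
  then show "measure_pmf.expectation (resample Dd R x) f = measure_pmf.expectation (resample Dd R y) f"
    by simp
qed

lemma depends_only_on_resample:
  assumes "depends_only_on (- R) (set_pmf (prod_dist Dd)) f"
    and "x \<in> set_pmf (prod_dist Dd)" and "y \<in> set_pmf (resample Dd R x)"
  shows "f y = f x"
  using set_pmf_resample(2)[OF assms(3)]
  by (intro depends_only_onD[OF assms(1)] resample_in_support[OF assms(2,3)] assms(2)) auto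

lemma expectation_resample_prod_dist:
  fixes f :: "('i::finite \<Rightarrow> 'a) \<Rightarrow> real"
  assumes "\<And>x. \<bar>f x\<bar> \<le> B"
  shows "measure_pmf.expectation (prod_dist Dd) (\<lambda>x. measure_pmf.expectation (resample Dd R x) f)
       = measure_pmf.expectation (prod_dist Dd) f"
  using expectation_bind_pmf[OF assms, of "prod_dist Dd" "resample Dd R"]
  by (simp add: bind_prod_dist_resample)

lemma expectation_resample_independent:
  fixes f :: "('i::finite \<Rightarrow> 'a) \<Rightarrow> real"
  assumes f: "depends_only_on R (set_pmf (prod_dist Dd)) f" and x: "x \<in> set_pmf (prod_dist Dd)"
  shows "measure_pmf.expectation (resample Dd R x) f = measure_pmf.expectation (prod_dist Dd) f"
proof -
  let ?merge = "\<lambda>z i. if i \<in> R then z i else x i"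
  have "measure_pmf.expectation (resample Dd R x) f =
        measure_pmf.expectation (prod_dist Dd) (\<lambda>z. f (?merge z))"
    by (simp add: resample_def)
  also have "\<dots> = measure_pmf.expectation (prod_dist Dd) f"
  proof (rule expectation_cong_set_pmf)
    fix z assume "z \<in> set_pmf (prod_dist Dd)"
    with x show "f (?merge z) = f z"
      by (intro depends_only_onD[OF f]) (auto simp: set_pmf_prod_dist)
  qed
  finally show ?thesis .
qed

lemma expectation_mult_resample:
  fixes f h :: "('i::finite \<Rightarrow> 'a) \<Rightarrow> real"
  assumes f: "depends_only_on (- R) (set_pmf (prod_dist Dd)) f"
    and bounds: "\<And>x. \<bar>f x\<bar> \<le> B" "\<And>x. \<bar>h x\<bar> \<le> B'"
  shows "measure_pmf.expectation (prod_dist Dd)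
           (\<lambda>x. f x * measure_pmf.expectation (resample Dd R x) h)
       = measure_pmf.expectation (prod_dist Dd) (\<lambda>x. f x * h x)"
proof -
  have fh: "\<bar>f x * h x\<bar> \<le> B * B'" for x
    using bounds(1)[of x] bounds(2)[of x] abs_ge_zero[of "f x"] abs_ge_zero[of "h x"]
    unfolding abs_mult by (intro mult_mono) linarith+
  have "measure_pmf.expectation (prod_dist Dd) (\<lambda>x. f x * measure_pmf.expectation (resample Dd R x) h)
      = measure_pmf.expectation (prod_dist Dd)
          (\<lambda>x. measure_pmf.expectation (resample Dd R x) (\<lambda>y. f y * h y))"
  proof (rule expectation_cong_set_pmf)
    fix x assume x: "x \<in> set_pmf (prod_dist Dd)"
    have "measure_pmf.expectation (resample Dd R x) (\<lambda>y. f y * h y) =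
          measure_pmf.expectation (resample Dd R x) (\<lambda>y. f x * h y)"
      by (rule expectation_cong_set_pmf) (metis depends_only_on_resample[OF f x])
    then show "f x * measure_pmf.expectation (resample Dd R x) h =
               measure_pmf.expectation (resample Dd R x) (\<lambda>y. f y * h y)"
      by simp
  qed
  also have "\<dots> = measure_pmf.expectation (prod_dist Dd) (\<lambda>x. f x * h x)"
    by (rule expectation_resample_prod_dist[OF fh])
  finally show ?thesis .
qed

lemma expectation_mult_independent:
  fixes f g :: "('i::finite \<Rightarrow> 'a) \<Rightarrow> real"
  assumes f: "depends_only_on R (set_pmf (prod_dist Dd)) f"
    and g: "depends_only_on (- R) (set_pmf (prod_dist Dd)) g"
    and bounds: "\<And>x. \<bar>f x\<bar> \<le> B" "\<And>x. \<bar>g x\<bar> \<le> B'"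
  shows "measure_pmf.expectation (prod_dist Dd) (\<lambda>x. f x * g x)
       = measure_pmf.expectation (prod_dist Dd) f * measure_pmf.expectation (prod_dist Dd) g"
proof -
  have "measure_pmf.expectation (prod_dist Dd) (\<lambda>x. g x * f x)
      = measure_pmf.expectation (prod_dist Dd) (\<lambda>x. g x * measure_pmf.expectation (resample Dd R x) f)"
    by (rule expectation_mult_resample[OF g bounds(2,1), symmetric])
  also have "\<dots> = measure_pmf.expectation (prod_dist Dd)
                    (\<lambda>x. g x * measure_pmf.expectation (prod_dist Dd) f)"
    by (rule expectation_cong_set_pmf) (simp add: expectation_resample_independent[OF f])
  finally show ?thesis by (simp add: mult.commute)
qed

subsection \<open>A maximum principle for linear recursions\<close>

text \<open>At an index maximising \<open>\<bar>e r\<bar> / c r\<close>, the two recursions give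
  \<open>\<bar>e r\<bar> \<le> M * (c r - p)\<close> for the maximum M, which forces M = 0.\<close>
lemma linear_recursion_vanishes:
  fixes e c :: "'r::finite \<Rightarrow> real" and w :: "'j \<Rightarrow> real"
    and succ :: "'j \<Rightarrow> 'r" and I :: "'r \<Rightarrow> 'j set"
  assumes w: "\<And>j. 0 \<le> w j" and p: "0 < p" and c: "\<And>r. 0 < c r"
    and c_rec: "\<And>r. c r = p + (\<Sum>j\<in>I r. w j * c (succ j))"
    and e_rec: "\<And>r. e r = (\<Sum>j\<in>I r. w j * e (succ j))"
  shows "e r = 0"
proof -
  define M where "M = Max (range (\<lambda>r. \<bar>e r\<bar> / c r))"
  have e_le: "\<bar>e r\<bar> \<le> M * c r" for r
    using Max_ge[of "range (\<lambda>r. \<bar>e r\<bar> / c r)" "\<bar>e r\<bar> / c r"] c[of r]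
    by (simp add: M_def divide_le_eq)
  have e_le_loss: "\<bar>e r\<bar> \<le> M * (c r - p)" for r
  proof -
    have "\<bar>e r\<bar> \<le> (\<Sum>j\<in>I r. \<bar>w j * e (succ j)\<bar>)"
      unfolding e_rec[of r] by (rule sum_abs)
    also have "\<dots> \<le> (\<Sum>j\<in>I r. w j * (M * c (succ j)))"
      using w by (intro sum_mono) (simp add: abs_mult mult_left_mono e_le)
    also have "\<dots> = M * (\<Sum>j\<in>I r. w j * c (succ j))"
      by (simp add: sum_distrib_left mult.left_commute)
    also have "\<dots> = M * (c r - p)"
      using c_rec[of r] by simp
    finally show ?thesis .
  qed
  have "M \<in> range (\<lambda>r. \<bar>e r\<bar> / c r)"
    unfolding M_def by (rule Max_in) auto
  then obtain r0 where "M = \<bar>e r0\<bar> / c r0" by blast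
  then have "M \<ge> 0" and "M * c r0 = \<bar>e r0\<bar>"
    using c[of r0] by simp_all
  with e_le_loss[of r0] have "M * p \<le> 0"
    by (simp add: algebra_simps)
  with p \<open>M \<ge> 0\<close> have "M = 0"
    by (simp add: mult_le_0_iff)
  with e_le[of r] show ?thesis by simp
qed

locale extremal_instance =
  fixes Dd :: "'i::finite \<Rightarrow> 'a pmf"
    and V :: "'i \<Rightarrow> 'a set"
    and S :: "'c::finite \<Rightarrow> 'i set"
    and phi :: "'c \<Rightarrow> ('i \<Rightarrow> 'a) \<Rightarrow> bool"
  assumes dist_on_dom: "\<And>i. set_pmf (Dd i) \<subseteq> V i"
    and scope_nonempty: "\<And>k. S k \<noteq> {}"
    and clause_local: "\<And>k x y. (\<forall>i. x i \<in> V i) \<Longrightarrow> (\<forall>i. y i \<in> V i) \<Longrightarrow>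
                          (\<forall>i\<in>S k. x i = y i) \<Longrightarrow> phi k x = phi k y"
    and extremal: "extremal V S phi"
begin

abbreviation D :: "('i \<Rightarrow> 'a) pmf" where "D \<equiv> prod_dist Dd"

abbreviation Phi :: "('i \<Rightarrow> 'a) \<Rightarrow> bool" where "Phi \<equiv> formula phi"

definition false_clauses :: "('i \<Rightarrow> 'a) \<Rightarrow> 'c set" where
  "false_clauses x = {k. \<not> phi k x}"

definition scopes :: "'c set \<Rightarrow> 'i set" where
  "scopes F = (\<Union>k\<in>F. S k)"

lemma support_in_domains: "x \<in> set_pmf D \<Longrightarrow> \<forall>i. x i \<in> V i"
  using dist_on_dom by (auto simp: set_pmf_prod_dist)

lemma clause_depends_only_on_scope: "depends_only_on (S k) (set_pmf D) (phi k)"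
  unfolding depends_only_on_def using clause_local support_in_domains by blast

lemma false_clauses_disjoint:
  "x \<in> set_pmf D \<Longrightarrow> \<not> phi k x \<Longrightarrow> \<not> phi l x \<Longrightarrow> k \<noteq> l \<Longrightarrow> S k \<inter> S l = {}"
  using extremal support_in_domains unfolding extremal_def by blast

lemma resample_keeps_false:
  assumes x: "x \<in> set_pmf D" and l: "\<not> phi l x" and disj: "S l \<inter> A = {}"
    and y: "y \<in> set_pmf (resample Dd A x)"
  shows "\<not> phi l y"
proof -
  have "phi l y = phi l x"
    using set_pmf_resample(2)[OF y] disj
    by (intro depends_only_onD[OF clause_depends_only_on_scope] resample_in_support[OF x y] x) auto
  with l show ?thesis by simp
qed

lemma bind_resample_cong_false:
  assumes x: "x \<in> set_pmf D" and k: "\<not> phi k x" and l: "\<not> phi l x" and "k \<noteq> l"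
    and fg: "\<And>y. y \<in> set_pmf D \<Longrightarrow> \<not> phi l y \<Longrightarrow> f y = g y"
  shows "bind_pmf (resample Dd (S k) x) f = bind_pmf (resample Dd (S k) x) g"
proof (intro bind_pmf_cong refl fg)
  fix y assume y: "y \<in> set_pmf (resample Dd (S k) x)"
  show "y \<in> set_pmf D" by (rule resample_in_support[OF x y])
  have "S l \<inter> S k = {}" using false_clauses_disjoint[OF x l k] \<open>k \<noteq> l\<close> by blast
  then show "\<not> phi l y" by (rule resample_keeps_false[OF x l _ y])
qed

subsection \<open>Irrelevance of the selection rule\<close>

primrec outcome :: "nat \<Rightarrow> ('i \<Rightarrow> 'a) \<Rightarrow> ('i \<Rightarrow> 'a) option pmf" where
  "outcome 0 x = return_pmf (if Phi x then Some x else None)"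
| "outcome (Suc t) x = (if Phi x then return_pmf (Some x)
     else bind_pmf (resample Dd (S (SOME k. \<not> phi k x)) x) (outcome t))"

lemma outcome_sat: "Phi x \<Longrightarrow> outcome t x = return_pmf (Some x)"
  by (cases t) auto

lemma some_false_clause: "\<not> Phi x \<Longrightarrow> \<not> phi (SOME k. \<not> phi k x) x"
  unfolding formula_def by (rule someI_ex) auto

text \<open>If k differs from the clause chosen by \<open>outcome\<close>, each of the two stays false while the
  other one's scope is resampled, so either order amounts to resampling both scopes.\<close>
lemma outcome_Suc_false:
  assumes "x \<in> set_pmf D" and "\<not> phi k x"
  shows "outcome (Suc t) x = bind_pmf (resample Dd (S k) x) (outcome t)"
  using assms
proof (induction t arbitrary: x k)
  case 0
  have unfinished: "bind_pmf (resample Dd (S k) x) (outcome 0) = return_pmf None"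
    if "x \<in> set_pmf D" "\<not> phi k x" "\<not> phi l x" "k \<noteq> l" for k l
  proof -
    have "bind_pmf (resample Dd (S k) x) (outcome 0) =
          bind_pmf (resample Dd (S k) x) (\<lambda>_. return_pmf None)"
      by (rule bind_resample_cong_false[OF that]) (auto simp: formula_def)
    then show ?thesis by simp
  qed
  let ?k0 = "SOME k. \<not> phi k x"
  have "\<not> Phi x" and "\<not> phi ?k0 x"
    using "0.prems" some_false_clause by (auto simp: formula_def)
  then show ?case
    using "0.prems" unfinished[of ?k0 k] unfinished[of k ?k0]
    by (cases "k = ?k0") (auto simp del: outcome.simps(1))
next
  case (Suc t)
  have merge: "bind_pmf (resample Dd (S k) x) (outcome (Suc t)) =
               bind_pmf (resample Dd (S k \<union> S l) x) (outcome t)"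
    if "x \<in> set_pmf D" "\<not> phi k x" "\<not> phi l x" "k \<noteq> l" for k l
  proof -
    have "bind_pmf (resample Dd (S k) x) (outcome (Suc t)) =
          bind_pmf (resample Dd (S k) x) (\<lambda>y. bind_pmf (resample Dd (S l) y) (outcome t))"
      by (rule bind_resample_cong_false[OF that]) (rule Suc.IH)
    then show ?thesis
      by (simp add: bind_assoc_pmf[symmetric] bind_resample_resample)
  qed
  let ?k0 = "SOME k. \<not> phi k x"
  have "\<not> Phi x" and "\<not> phi ?k0 x"
    using Suc.prems some_false_clause by (auto simp: formula_def)
  then have step: "outcome (Suc (Suc t)) x = bind_pmf (resample Dd (S ?k0) x) (outcome (Suc t))"
    by (simp only: outcome.simps(2) if_False)
  show ?case
    using Suc.prems \<open>\<not> phi ?k0 x\<close> step merge[of ?k0 k] merge[of k ?k0]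
    by (cases "k = ?k0") (auto simp: Un_commute simp del: outcome.simps(2))
qed

lemma outcome_add_card:
  assumes "x \<in> set_pmf D" and "F \<subseteq> false_clauses x"
  shows "outcome (t + card F) x = bind_pmf (resample Dd (scopes F) x) (outcome t)"
  using finite[of F] assms
proof (induction F arbitrary: x rule: finite_induct)
  case empty
  then show ?case by (simp add: scopes_def resample_empty bind_return_pmf)
next
  case (insert k F)
  have x: "x \<in> set_pmf D" and k: "\<not> phi k x" and F: "F \<subseteq> false_clauses x"
    using insert.prems by (auto simp: false_clauses_def)
  have "outcome (t + card (insert k F)) x = bind_pmf (resample Dd (S k) x) (outcome (t + card F))"
    using insert.hyps outcome_Suc_false[OF x k] by simp
  also have "\<dots> = bind_pmf (resample Dd (S k) x)
                    (\<lambda>y. bind_pmf (resample Dd (scopes F) y) (outcome t))"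
  proof (intro bind_pmf_cong refl insert.IH)
    fix y assume y: "y \<in> set_pmf (resample Dd (S k) x)"
    show "y \<in> set_pmf D" by (rule resample_in_support[OF x y])
    show "F \<subseteq> false_clauses y"
    proof
      fix j assume "j \<in> F"
      then have j: "\<not> phi j x" and "j \<noteq> k" using F insert.hyps by (auto simp: false_clauses_def)
      then have "S j \<inter> S k = {}" using false_clauses_disjoint[OF x j k] by simp
      then show "j \<in> false_clauses y"
        using resample_keeps_false[OF x j _ y] by (simp add: false_clauses_def)
    qed
  qed
  also have "\<dots> = bind_pmf (resample Dd (scopes (insert k F)) x) (outcome t)"
    by (simp add: bind_assoc_pmf[symmetric] bind_resample_resample scopes_def)
  finally show ?case .
qed

definition success_prob :: "nat \<Rightarrow> ('i \<Rightarrow> 'a) \<Rightarrow> ('i \<Rightarrow> 'a) set \<Rightarrow> real" where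
  "success_prob t x A = measure_pmf.prob (outcome t x) (Some ` A)"

definition limit_prob :: "('i \<Rightarrow> 'a) \<Rightarrow> ('i \<Rightarrow> 'a) set \<Rightarrow> real" where
  "limit_prob x A = (SUP t. success_prob t x A)"

lemma success_prob_bounds: "0 \<le> success_prob t x A" "success_prob t x A \<le> 1"
  by (auto simp: success_prob_def)

lemma success_prob_abs_le: "\<bar>success_prob t x A\<bar> \<le> 1"
  using success_prob_bounds[of t x A] by simp

lemma success_prob_sat: "Phi x \<Longrightarrow> success_prob t x A = indicator A x"
  by (auto simp: success_prob_def outcome_sat indicator_def)

lemma success_prob_Suc:
  "\<not> Phi x \<Longrightarrow> success_prob (Suc t) x A =
     measure_pmf.expectation (resample Dd (S (SOME k. \<not> phi k x)) x) (\<lambda>y. success_prob t y A)"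
  by (simp add: success_prob_def prob_bind_pmf)

lemma success_prob_mono: "success_prob t x A \<le> success_prob (Suc t) x A"
proof (induction t arbitrary: x)
  case 0
  show ?case by (cases "Phi x") (auto simp: success_prob_def)
next
  case (Suc t)
  show ?case
  proof (cases "Phi x")
    case False
    then show ?thesis
      unfolding success_prob_Suc[OF False]
      by (intro integral_mono integrable_measure_pmf_bounded[OF success_prob_abs_le] Suc.IH)
  qed (simp add: success_prob_sat)
qed

lemma success_prob_tendsto_limit: "(\<lambda>t. success_prob t x A) \<longlonglongrightarrow> limit_prob x A"
  unfolding limit_prob_def
  by (rule LIMSEQ_incseq_SUP)
     (auto intro!: bdd_aboveI[where M=1] success_prob_bounds incseq_SucI success_prob_mono)

lemma limit_prob_sat: "Phi x \<Longrightarrow> limit_prob x A = indicator A x"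
  by (simp add: limit_prob_def success_prob_sat)

lemma limit_prob_abs_le: "\<bar>limit_prob x A\<bar> \<le> 1"
proof -
  have bdd: "bdd_above (range (\<lambda>t. success_prob t x A))"
    by (auto intro!: bdd_aboveI[where M=1] success_prob_bounds)
  have "0 \<le> limit_prob x A"
    using cSUP_upper[OF UNIV_I bdd, of 0] success_prob_bounds(1)[of 0 x A]
    by (simp add: limit_prob_def)
  moreover have "limit_prob x A \<le> 1"
    unfolding limit_prob_def by (rule cSUP_least) (auto intro: success_prob_bounds)
  ultimately show ?thesis by simp
qed

definition harmonic :: "(('i \<Rightarrow> 'a) \<Rightarrow> real) \<Rightarrow> bool" where
  "harmonic g \<longleftrightarrow>
     (\<forall>x\<in>set_pmf D. g x = measure_pmf.expectation (resample Dd (scopes (false_clauses x)) x) g)"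

lemma harmonic_limit_prob: "harmonic (\<lambda>x. limit_prob x A)"
  unfolding harmonic_def
proof
  fix x assume x: "x \<in> set_pmf D"
  let ?n = "card (false_clauses x)" and ?R = "resample Dd (scopes (false_clauses x)) x"
  have shift: "success_prob (t + ?n) x A = measure_pmf.expectation ?R (\<lambda>y. success_prob t y A)" for t
    using outcome_add_card[OF x subset_refl, of t] by (simp add: success_prob_def prob_bind_pmf)
  have "(\<lambda>t. success_prob (t + ?n) x A) \<longlonglongrightarrow> limit_prob x A"
    by (rule LIMSEQ_ignore_initial_segment[OF success_prob_tendsto_limit])
  moreover have "(\<lambda>t. success_prob (t + ?n) x A) \<longlonglongrightarrow> measure_pmf.expectation ?R (\<lambda>y. limit_prob y A)"
    unfolding shift
    by (rule expectation_pmf_dominated_convergence[where B=1])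
       (auto intro: success_prob_tendsto_limit success_prob_abs_le)
  ultimately show "limit_prob x A = measure_pmf.expectation ?R (\<lambda>y. limit_prob y A)"
    by (rule LIMSEQ_unique)
qed

subsection \<open>The limit distribution\<close>

definition sat_outside :: "'i set \<Rightarrow> ('i \<Rightarrow> 'a) set" where
  "sat_outside R = {x. \<forall>k. S k \<inter> R = {} \<longrightarrow> phi k x}"

definition all_false :: "'c set \<Rightarrow> ('i \<Rightarrow> 'a) set" where
  "all_false F = {x. \<forall>k\<in>F. \<not> phi k x}"

definition meeting_families :: "'i set \<Rightarrow> 'c set set" where
  "meeting_families R = {F. F \<noteq> {} \<and> (\<forall>k\<in>F. S k \<inter> R \<noteq> {})}"

lemma sat_outside_UNIV: "sat_outside UNIV = UNIV"
  using scope_nonempty by (auto simp: sat_outside_def)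

lemma sat_imp_sat_outside: "Phi x \<Longrightarrow> x \<in> sat_outside R"
  by (auto simp: sat_outside_def formula_def)

lemma false_clauses_eq_iff:
  assumes x: "x \<in> set_pmf D"
  shows "F = false_clauses x \<longleftrightarrow> x \<in> all_false F \<inter> sat_outside (scopes F)"
proof
  assume F: "F = false_clauses x"
  have "phi k x" if "S k \<inter> scopes F = {}" for k
    using that scope_nonempty[of k] by (auto simp: F false_clauses_def scopes_def)
  then show "x \<in> all_false F \<inter> sat_outside (scopes F)"
    by (auto simp: F all_false_def false_clauses_def sat_outside_def)
next
  assume "x \<in> all_false F \<inter> sat_outside (scopes F)"
  then have F_false: "\<And>k. k \<in> F \<Longrightarrow> \<not> phi k x"
    and sat: "\<And>k. S k \<inter> scopes F = {} \<Longrightarrow> phi k x"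
    by (auto simp: all_false_def sat_outside_def)
  have "k \<in> F" if k: "\<not> phi k x" for k
  proof -
    obtain j where "j \<in> F" and "S k \<inter> S j \<noteq> {}"
      using sat[of k] k by (auto simp: scopes_def)
    with false_clauses_disjoint[OF x k F_false[of j]] show ?thesis by auto
  qed
  with F_false show "F = false_clauses x"
    by (auto simp: false_clauses_def)
qed

lemma indicator_sat_outside_split:
  assumes x: "x \<in> set_pmf D"
  shows "indicator (sat_outside R) x = indicator {x. Phi x} x +
           (\<Sum>F\<in>meeting_families R. indicator (all_false F \<inter> sat_outside (scopes F)) x :: real)"
proof -
  have "(\<Sum>F\<in>meeting_families R. indicator (all_false F \<inter> sat_outside (scopes F)) x :: real) =
        (\<Sum>F\<in>meeting_families R. if F = false_clauses x then 1 else 0)"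
    by (intro sum.cong refl) (simp add: false_clauses_eq_iff[OF x])
  also have "\<dots> = (if false_clauses x \<in> meeting_families R then 1 else 0)"
    by (simp add: sum.delta')
  finally have sum: "(\<Sum>F\<in>meeting_families R. indicator (all_false F \<inter> sat_outside (scopes F)) x :: real)
                     = (if false_clauses x \<in> meeting_families R then 1 else 0)" .
  show ?thesis
  proof (cases "Phi x")
    case True
    then show ?thesis
      using sum sat_imp_sat_outside by (auto simp: meeting_families_def false_clauses_def formula_def)
  next
    case False
    then have "x \<in> sat_outside R \<longleftrightarrow> false_clauses x \<in> meeting_families R"
      by (auto simp: sat_outside_def meeting_families_def false_clauses_def formula_def)
    with False sum show ?thesis by (simp add: indicator_def)
  qed
qed

lemma all_false_depends_only_on_scopes:
  "depends_only_on (scopes F) (set_pmf D) (indicator (all_false F) :: _ \<Rightarrow> real)"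
  unfolding depends_only_on_indicator
proof (intro ballI impI)
  fix x y assume "x \<in> set_pmf D" "y \<in> set_pmf D" "\<forall>i\<in>scopes F. x i = y i"
  then have "phi k x = phi k y" if "k \<in> F" for k
    using that by (intro depends_only_onD[OF clause_depends_only_on_scope]) (auto simp: scopes_def)
  then show "x \<in> all_false F \<longleftrightarrow> y \<in> all_false F"
    by (auto simp: all_false_def)
qed

lemma sat_outside_depends_only_on_complement:
  "depends_only_on (- R) (set_pmf D) (indicator (sat_outside R) :: _ \<Rightarrow> real)"
  unfolding depends_only_on_indicator
proof (intro ballI impI)
  fix x y assume "x \<in> set_pmf D" "y \<in> set_pmf D" "\<forall>i\<in>- R. x i = y i"
  then have "phi k x = phi k y" if "S k \<inter> R = {}" for k
    using that by (intro depends_only_onD[OF clause_depends_only_on_scope]) auto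
  then show "x \<in> sat_outside R \<longleftrightarrow> y \<in> sat_outside R"
    by (auto simp: sat_outside_def)
qed

text \<open>Where exactly F is false, a harmonic g is its own average over resampling
  \<open>scopes F\<close>; this average and \<open>sat_outside (scopes F)\<close> only see the other variables,
  whereas \<open>all_false F\<close> only sees \<open>scopes F\<close>.\<close>
lemma expectation_all_false_factor:
  fixes g :: "('i \<Rightarrow> 'a) \<Rightarrow> real"
  assumes harmonic: "harmonic g"
    and bound: "\<And>x. \<bar>g x\<bar> \<le> B"
  shows "measure_pmf.expectation D (\<lambda>x. indicator (all_false F \<inter> sat_outside (scopes F)) x * g x)
       = measure_pmf.prob D (all_false F) *
         measure_pmf.expectation D (\<lambda>x. indicator (sat_outside (scopes F)) x * g x)"
proof -
  let ?U = "scopes F"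
  define h where "h x = indicator (sat_outside ?U) x * measure_pmf.expectation (resample Dd ?U x) g"
    for x
  have h_bound: "\<bar>h x\<bar> \<le> B" for x
    using abs_expectation_pmf_le[OF bound, of "resample Dd ?U x"] bound[of x]
    by (auto simp: h_def indicator_def)
  have h_dep: "depends_only_on (- ?U) (set_pmf D) h"
    unfolding h_def
    by (intro depends_only_on_mult sat_outside_depends_only_on_complement
        depends_only_on_expectation_resample)
  have "measure_pmf.expectation D (\<lambda>x. indicator (all_false F \<inter> sat_outside ?U) x * g x) =
        measure_pmf.expectation D (\<lambda>x. indicator (all_false F) x * h x)"
  proof (rule expectation_cong_set_pmf)
    fix x assume x: "x \<in> set_pmf D"
    show "indicator (all_false F \<inter> sat_outside ?U) x * g x = indicator (all_false F) x * h x"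
    proof (cases "x \<in> all_false F \<inter> sat_outside ?U")
      case True
      then have "F = false_clauses x" by (simp add: false_clauses_eq_iff[OF x])
      with True x harmonic show ?thesis by (simp add: h_def harmonic_def)
    qed (auto simp: h_def indicator_def)
  qed
  also have "\<dots> = measure_pmf.prob D (all_false F) * measure_pmf.expectation D h"
    by (subst expectation_mult_independent[OF all_false_depends_only_on_scopes h_dep _ h_bound,
          where B=1]) (auto simp: indicator_def)
  also have "measure_pmf.expectation D h =
             measure_pmf.expectation D (\<lambda>x. indicator (sat_outside ?U) x * g x)"
    unfolding h_def
    by (rule expectation_mult_resample[OF sat_outside_depends_only_on_complement _ bound, where B=1])
       (auto simp: indicator_def)
  finally show ?thesis .
qed

lemma expectation_sat_outside_recursion:
  fixes g :: "('i \<Rightarrow> 'a) \<Rightarrow> real"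
  assumes harmonic: "harmonic g"
    and bound: "\<And>x. \<bar>g x\<bar> \<le> B"
  shows "measure_pmf.expectation D (\<lambda>x. indicator (sat_outside R) x * g x) =
           measure_pmf.expectation D (\<lambda>x. indicator {x. Phi x} x * g x) +
           (\<Sum>F\<in>meeting_families R. measure_pmf.prob D (all_false F) *
              measure_pmf.expectation D (\<lambda>x. indicator (sat_outside (scopes F)) x * g x))"
proof -
  have integrable: "integrable D (\<lambda>x. indicator X x * g x)" for X
    by (rule integrable_measure_pmf_bounded[where B=B])
       (use bound order_trans[OF abs_ge_zero bound] in \<open>auto simp: indicator_def\<close>)
  have "measure_pmf.expectation D (\<lambda>x. indicator (sat_outside R) x * g x) =
        measure_pmf.expectation D (\<lambda>x. indicator {x. Phi x} x * g x +
          (\<Sum>F\<in>meeting_families R. indicator (all_false F \<inter> sat_outside (scopes F)) x * g x))"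
    by (rule expectation_cong_set_pmf)
       (simp add: indicator_sat_outside_split distrib_right sum_distrib_right)
  also have "\<dots> = measure_pmf.expectation D (\<lambda>x. indicator {x. Phi x} x * g x) +
      (\<Sum>F\<in>meeting_families R.
         measure_pmf.expectation D (\<lambda>x. indicator (all_false F \<inter> sat_outside (scopes F)) x * g x))"
    by (simp only: Bochner_Integration.integral_add[OF integrable Bochner_Integration.integrable_sum]
        Bochner_Integration.integral_sum[OF integrable] integrable)
  also have "\<dots> = measure_pmf.expectation D (\<lambda>x. indicator {x. Phi x} x * g x) +
      (\<Sum>F\<in>meeting_families R. measure_pmf.prob D (all_false F) *
         measure_pmf.expectation D (\<lambda>x. indicator (sat_outside (scopes F)) x * g x))"
    by (simp add: expectation_all_false_factor[OF harmonic bound])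
  finally show ?thesis .
qed

lemma expectation_harmonic:
  fixes g :: "('i \<Rightarrow> 'a) \<Rightarrow> real"
  assumes harmonic: "harmonic g"
    and bound: "\<And>x. \<bar>g x\<bar> \<le> B"
    and satisfiable: "measure_pmf.prob D {x. Phi x} > 0"
  shows "measure_pmf.expectation D g =
           measure_pmf.expectation D (\<lambda>x. indicator {x. Phi x} x * g x) / measure_pmf.prob D {x. Phi x}"
proof -
  define p where "p = measure_pmf.prob D {x. Phi x}"
  define q where "q = measure_pmf.expectation D (\<lambda>x. indicator {x. Phi x} x * g x) / p"
  define a where "a R = measure_pmf.expectation D (\<lambda>x. indicator (sat_outside R) x * g x)" for R
  define c where "c R = measure_pmf.prob D (sat_outside R)" for R
  define w where "w F = measure_pmf.prob D (all_false F)" for F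
  have p: "0 < p" using satisfiable by (simp add: p_def)
  have a_rec: "a R = p * q + (\<Sum>F\<in>meeting_families R. w F * a (scopes F))" for R
    using expectation_sat_outside_recursion[OF harmonic bound, of R] p
    by (simp add: a_def w_def q_def)
  have c_rec: "c R = p + (\<Sum>F\<in>meeting_families R. w F * c (scopes F))" for R
    using expectation_sat_outside_recursion[of "\<lambda>_. 1" 1 R]
    by (simp add: c_def w_def p_def harmonic_def)
  have c_pos: "0 < c R" for R
    using measure_pmf.finite_measure_mono[of "{x. Phi x}" "sat_outside R" D] sat_imp_sat_outside p
    by (fastforce simp: c_def p_def)
  have w_nonneg: "0 \<le> w F" for F
    by (simp add: w_def)
  have e_rec: "a R - q * c R = (\<Sum>F\<in>meeting_families R. w F * (a (scopes F) - q * c (scopes F)))"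
    for R
  proof -
    have "a R - q * c R = (\<Sum>F\<in>meeting_families R. w F * a (scopes F)) -
                          q * (\<Sum>F\<in>meeting_families R. w F * c (scopes F))"
      by (subst a_rec, subst c_rec) (simp add: ring_distribs mult.commute[of q p])
    also have "\<dots> = (\<Sum>F\<in>meeting_families R. w F * (a (scopes F) - q * c (scopes F)))"
      by (simp add: sum_subtractf sum_distrib_left right_diff_distrib mult.left_commute)
    finally show ?thesis .
  qed
  have "a UNIV - q * c UNIV = 0"
    by (rule linear_recursion_vanishes[where e="\<lambda>R. a R - q * c R", OF w_nonneg p c_pos c_rec e_rec])
  then show ?thesis
    by (simp add: a_def c_def sat_outside_UNIV q_def p_def)
qed

lemma expectation_limit_prob:
  assumes "measure_pmf.prob D {x. Phi x} > 0"
  shows "measure_pmf.expectation D (\<lambda>x. limit_prob x A) =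
           measure_pmf.prob D ({x. Phi x} \<inter> A) / measure_pmf.prob D {x. Phi x}"
proof -
  have "measure_pmf.expectation D (\<lambda>x. indicator {x. Phi x} x * limit_prob x A) =
        measure_pmf.expectation D (indicator ({x. Phi x} \<inter> A))"
    by (intro arg_cong[where f="measure_pmf.expectation D"] ext)
       (simp add: indicator_inter_arith limit_prob_sat indicator_def)
  then show ?thesis
    using expectation_harmonic[OF harmonic_limit_prob limit_prob_abs_le assms] by simp
qed

end

subsection \<open>Runs of partial rejection sampling\<close>

locale prs_instance = extremal_instance Dd V S phi
  for Dd :: "'i::finite \<Rightarrow> 'a pmf" and V S and phi :: "'c::finite \<Rightarrow> ('i \<Rightarrow> 'a) \<Rightarrow> bool" +
  fixes sel :: "('i, 'a, 'c) history \<Rightarrow> 'c pmf"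
  assumes sel_false: "\<And>h. fst h \<noteq> [] \<Longrightarrow> \<not> formula phi (hd (fst h)) \<Longrightarrow>
                          set_pmf (sel h) \<subseteq> {k. \<not> phi k (hd (fst h))}"
begin

lemma prs_run_support:
  "h \<in> set_pmf (prs_run phi Dd S sel t) \<Longrightarrow> fst h \<noteq> [] \<and> hd (fst h) \<in> set_pmf D"
proof (induction t arbitrary: h)
  case (Suc t)
  then obtain h' where h': "h' \<in> set_pmf (prs_run phi Dd S sel t)" and
    h: "h \<in> set_pmf (prs_step phi Dd S sel h')" by auto
  from Suc.IH[OF h'] have "fst h' \<noteq> []" and x: "hd (fst h') \<in> set_pmf D" by auto
  with h show ?case
    by (auto simp: prs_step_def split: if_splits dest!: resample_in_support[OF x])
qed auto

lemma bind_prs_step_outcome: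
  assumes "fst h \<noteq> []" and x: "hd (fst h) \<in> set_pmf D"
  shows "bind_pmf (prs_step phi Dd S sel h) (\<lambda>h'. outcome s (hd (fst h'))) =
           outcome (Suc s) (hd (fst h))"
proof (cases "Phi (hd (fst h))")
  case True
  then show ?thesis by (simp add: prs_step_def outcome_sat bind_return_pmf)
next
  case False
  have "bind_pmf (prs_step phi Dd S sel h) (\<lambda>h'. outcome s (hd (fst h'))) =
        bind_pmf (sel h) (\<lambda>k. bind_pmf (resample Dd (S k) (hd (fst h))) (outcome s))"
    using False by (simp add: prs_step_def bind_assoc_pmf bind_map_pmf)
  also have "\<dots> = bind_pmf (sel h) (\<lambda>_. outcome (Suc s) (hd (fst h)))"
    using sel_false[OF assms(1) False] by (intro bind_pmf_cong refl outcome_Suc_false[OF x, symmetric]) auto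
  finally show ?thesis by simp
qed

lemma bind_prs_run_outcome:
  "bind_pmf (prs_run phi Dd S sel t) (\<lambda>h. outcome s (hd (fst h))) = bind_pmf D (outcome (t + s))"
proof (induction t arbitrary: s)
  case 0
  then show ?case by (simp add: bind_map_pmf)
next
  case (Suc t)
  have "bind_pmf (prs_run phi Dd S sel (Suc t)) (\<lambda>h. outcome s (hd (fst h))) =
        bind_pmf (prs_run phi Dd S sel t) (\<lambda>h. outcome (Suc s) (hd (fst h)))"
    unfolding prs_run.simps bind_assoc_pmf
    by (intro bind_pmf_cong refl bind_prs_step_outcome) (auto dest: prs_run_support)
  also have "\<dots> = bind_pmf D (outcome (t + Suc s))"
    by (rule Suc.IH)
  finally show ?case by (simp only: add_Suc add_Suc_right)
qed

lemma prob_prs_run_success: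
  "measure_pmf.prob (prs_run phi Dd S sel t) {h. Phi (hd (fst h)) \<and> hd (fst h) \<in> A} =
     measure_pmf.expectation D (\<lambda>x. success_prob t x A)"
proof -
  have finished: "indicator {h. Phi (hd (fst h)) \<and> hd (fst h) \<in> A} =
                  (\<lambda>h. measure_pmf.prob (outcome 0 (hd (fst h))) (Some ` A))"
    by (auto simp: indicator_def fun_eq_iff)
  have "measure_pmf.prob (prs_run phi Dd S sel t) {h. Phi (hd (fst h)) \<and> hd (fst h) \<in> A} =
        measure_pmf.expectation (prs_run phi Dd S sel t)
          (indicator {h. Phi (hd (fst h)) \<and> hd (fst h) \<in> A})"
    by simp
  also have "\<dots> = measure_pmf.prob (bind_pmf (prs_run phi Dd S sel t) (\<lambda>h. outcome 0 (hd (fst h))))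
                      (Some ` A)"
    unfolding finished by (rule prob_bind_pmf[symmetric])
  also have "\<dots> = measure_pmf.expectation D (\<lambda>x. success_prob t x A)"
    by (simp only: bind_prs_run_outcome add_0_right prob_bind_pmf success_prob_def)
  finally show ?thesis .
qed

lemma prs_run_tendsto_conditional:
  assumes "measure_pmf.prob D {x. Phi x} > 0"
  shows "(\<lambda>t. measure_pmf.prob (prs_run phi Dd S sel t) {h. Phi (hd (fst h)) \<and> hd (fst h) \<in> A})
           \<longlonglongrightarrow> measure_pmf.prob D ({x. Phi x} \<inter> A) / measure_pmf.prob D {x. Phi x}"
  unfolding prob_prs_run_success expectation_limit_prob[OF assms, symmetric]
  by (rule expectation_pmf_dominated_convergence[where B=1])
     (auto intro: success_prob_tendsto_limit success_prob_abs_le)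

end

theorem theorem1:
  fixes Dd :: "'i::finite \<Rightarrow> 'a pmf"
    and V :: "'i \<Rightarrow> 'a set"
    and S :: "'c::finite \<Rightarrow> 'i set"
    and phi :: "'c \<Rightarrow> ('i \<Rightarrow> 'a) \<Rightarrow> bool"
    and sel :: "('i, 'a, 'c) history \<Rightarrow> 'c pmf"
  assumes V_countable: "\<And>i. countable (V i)"
    and dist_on_dom: "\<And>i. set_pmf (Dd i) \<subseteq> V i"
    and scope_nonempty: "\<And>k. S k \<noteq> {}"
    and clause_local: "\<And>k x y. (\<forall>i. x i \<in> V i) \<Longrightarrow> (\<forall>i. y i \<in> V i) \<Longrightarrow>
                          (\<forall>i\<in>S k. x i = y i) \<Longrightarrow> phi k x = phi k y"
    and extremal: "extremal V S phi"
    and satisfiable: "measure_pmf.prob (prod_dist Dd) {x. formula phi x} > 0"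
    and sel_false: "\<And>h. fst h \<noteq> [] \<Longrightarrow> \<not> formula phi (hd (fst h)) \<Longrightarrow>
                          set_pmf (sel h) \<subseteq> {k. \<not> phi k (hd (fst h))}"
  shows "((\<lambda>t. measure_pmf.prob (prs_run phi Dd S sel t) {h. formula phi (hd (fst h))})
           \<longlonglongrightarrow> 1)
       \<and> (\<forall>A. (\<lambda>t. measure_pmf.prob (prs_run phi Dd S sel t)
                   {h. formula phi (hd (fst h)) \<and> hd (fst h) \<in> A})
           \<longlonglongrightarrow> measure_pmf.prob (cond_pmf (prod_dist Dd) {x. formula phi x}) A)"
proof -
  interpret prs_instance Dd V S phi sel
    by unfold_locales (fact dist_on_dom scope_nonempty clause_local extremal sel_false)+
  have support_sat: "set_pmf (prod_dist Dd) \<inter> {x. formula phi x} \<noteq> {}"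
    using satisfiable by (simp flip: measure_pmf_zero_iff)
  have "(\<lambda>t. measure_pmf.prob (prs_run phi Dd S sel t) {h. formula phi (hd (fst h))}) \<longlonglongrightarrow> 1"
    using prs_run_tendsto_conditional[OF satisfiable, of UNIV] satisfiable by simp
  moreover have "(\<lambda>t. measure_pmf.prob (prs_run phi Dd S sel t)
                     {h. formula phi (hd (fst h)) \<and> hd (fst h) \<in> A})
           \<longlonglongrightarrow> measure_pmf.prob (cond_pmf (prod_dist Dd) {x. formula phi x}) A" for A
    using prs_run_tendsto_conditional[OF satisfiable, of A] by (simp add: measure_cond_pmf[OF support_sat])
  ultimately show ?thesis by blast
qed

end
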